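(* For all $x\in\mathbb{C}$ and all integers $n\ge0$, \[ \sum_{k=0}^n x^k\big(3L_{4k}+(7x-2)F_{4k+4}\big)=7x^{n+1}F_{4n+4} \] and \[ \sum_{k=0}^n x^k\big(15F_{4k}+(7x-2)L_{4k+4}\big)=7\big(x^{n+1}L_{4n+4}-2\big). \]
   Context: $F_n,L_n$ are the Fibonacci and Lucas numbers: $F_0=0$, $F_1=1$, $L_0=2$, $L_1=1$, $W_n=W_{n-1}+W_{n-2}$. *)

theory Defs
  imports Complex_Main "HOL-Number_Theory.Fib"
begin

fun lucas :: "nat \<Rightarrow> nat" where
  "lucas 0 = 2"
| "lucas (Suc 0) = 1"
| "lucas (Suc (Suc n)) = lucas (Suc n) + lucas n"

end

theory Submission
  imports Defs
begin

text \<open>Both sums telescope. Since \<open>2 F(m+4) = 7 F(m) + 3 L(m)\<close> and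
\<open>2 L(m+4) = 7 L(m) + 15 F(m)\<close>, the \<open>k\<close>-th summands are
\<open>7 (x^(k+1) F(4k+4) - x^k F(4k))\<close> and \<open>7 (x^(k+1) L(4k+4) - x^k L(4k))\<close>;
what remains are the boundary terms, with \<open>F(0) = 0\<close> and \<open>L(0) = 2\<close>.\<close>

lemma sum_weighted_telescope:
  fixes x c d :: "'a::comm_ring_1" and a b :: "nat \<Rightarrow> 'a"
  assumes step: "\<And>k. d * a (Suc k) = c * a k + b k"
  shows "(\<Sum>k=0..n. x ^ k * (b k + (c * x - d) * a (Suc k)))
           = c * (x ^ Suc n * a (Suc n) - a 0)"
proof -
  have "x ^ k * (b k + (c * x - d) * a (Suc k))
          = c * (x ^ Suc k * a (Suc k)) - c * (x ^ k * a k)" for k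
    using step[of k] by (simp add: algebra_simps)
  then have "(\<Sum>k=0..n. x ^ k * (b k + (c * x - d) * a (Suc k)))
               = (\<Sum>k=0..n. c * (x ^ Suc k * a (Suc k)) - c * (x ^ k * a k))"
    by simp
  also have "\<dots> = c * (x ^ Suc n * a (Suc n)) - c * a 0"
    by (subst sum_Suc_diff) simp_all
  finally show ?thesis
    by (simp add: right_diff_distrib)
qed

lemma fib_add_4: "2 * fib (m + 4) = 7 * fib m + 3 * lucas m"
  by (induction m rule: fib.induct) (simp_all add: numeral_eq_Suc)

lemma lucas_add_4: "2 * lucas (m + 4) = 7 * lucas m + 15 * fib m"
  by (induction m rule: fib.induct) (simp_all add: numeral_eq_Suc)

theorem corollary8:
  fixes x :: complex and n :: nat
  shows "(\<Sum>k=0..n. x ^ k * (3 * of_nat (lucas (4*k)) + (7*x - 2) * of_nat (fib (4*k+4))))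
           = 7 * x ^ (n+1) * of_nat (fib (4*n+4))
     \<and> ((\<Sum>k=0..n. x ^ k * (15 * of_nat (fib (4*k)) + (7*x - 2) * of_nat (lucas (4*k+4))))
           = 7 * (x ^ (n+1) * of_nat (lucas (4*n+4)) - 2))"
proof
  have "2 * (of_nat (fib (4 * Suc k)) :: complex)
          = 7 * of_nat (fib (4 * k)) + 3 * of_nat (lucas (4 * k))" for k
    using arg_cong[OF fib_add_4[of "4 * k"], of "of_nat :: nat \<Rightarrow> complex"]
    by (simp add: add.commute)
  from sum_weighted_telescope[where a = "\<lambda>k. of_nat (fib (4 * k))", OF this, of x n]
  show "(\<Sum>k=0..n. x ^ k * (3 * of_nat (lucas (4*k)) + (7*x - 2) * of_nat (fib (4*k+4))))
          = 7 * x ^ (n+1) * of_nat (fib (4*n+4))"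
    by (simp add: ac_simps)
next
  have "2 * (of_nat (lucas (4 * Suc k)) :: complex)
          = 7 * of_nat (lucas (4 * k)) + 15 * of_nat (fib (4 * k))" for k
    using arg_cong[OF lucas_add_4[of "4 * k"], of "of_nat :: nat \<Rightarrow> complex"]
    by (simp add: add.commute)
  from sum_weighted_telescope[where a = "\<lambda>k. of_nat (lucas (4 * k))", OF this, of x n]
  show "(\<Sum>k=0..n. x ^ k * (15 * of_nat (fib (4*k)) + (7*x - 2) * of_nat (lucas (4*k+4))))
          = 7 * (x ^ (n+1) * of_nat (lucas (4*n+4)) - 2)"
    by (simp add: ac_simps)
qed

end
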